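(* Let $e\geq 2$, $N$ cyclic of order $2^e$, $G$ any subgroup of $\mathrm{Hol}(N)$, $H$ any subgroup of $G$ of index $2^e$, and $C=\mathrm{Core}_G(H)$. If $|H\cap N|\geq 4$, then $G/C$ is not isomorphic to any transitive subgroup of $\mathrm{Hol}(N)$.
   Context: $\mathrm{Hol}(N)=N\rtimes\mathrm{Aut}(N)$ acts on $N$ by $(\eta,\alpha)\cdot x=\eta\,\alpha(x)$, with $N$ identified with a normal subgroup of it; a subgroup is transitive if it acts transitively on $N$. $\mathrm{Core}_G(H)$ is the largest normal subgroup of $G$ contained in $H$. *)

theory Defs
  imports "HOL-Algebra.Algebra"
begin

text \<open>Elements are pairs (eta, alpha)
  with eta in N = {0..<2^e} and alpha a unit mod 2^e (i.e. the automorphism x |-> alpha*x).\<close>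

definition Hol :: "nat \<Rightarrow> (nat \<times> nat) monoid" where
  "Hol e = \<lparr> carrier = {(a, u). a < 2^e \<and> u < 2^e \<and> coprime u (2^e)},
             monoid.mult = (\<lambda>(a, u) (b, v). ((a + u * b) mod 2^e, (u * v) mod 2^e)),
             one = (0, 1) \<rparr>"

definition hol_act :: "nat \<Rightarrow> nat \<times> nat \<Rightarrow> nat \<Rightarrow> nat" where
  "hol_act e g x = (fst g + snd g * x) mod 2^e"

text \<open>N as the normal subgroup of translations of Hol(N).\<close>
definition transl :: "nat \<Rightarrow> (nat \<times> nat) set" where
  "transl e = {(a, 1) | a. a < 2^e}"

definition transitive_sub :: "nat \<Rightarrow> (nat \<times> nat) set \<Rightarrow> bool" where
  "transitive_sub e T \<longleftrightarrow> subgroup T (Hol e) \<and>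
     (\<forall>x < 2^e. \<forall>y < 2^e. \<exists>g \<in> T. hol_act e g x = y)"

definition core :: "('a, 'b) monoid_scheme \<Rightarrow> 'a set \<Rightarrow> 'a set" where
  "core G H = (\<Inter>g \<in> carrier G. (\<lambda>h. g \<otimes>\<^bsub>G\<^esub> h \<otimes>\<^bsub>G\<^esub> inv\<^bsub>G\<^esub> g) ` H)"

end

theory Submission
  imports Defs "HOL-Number_Theory.Pocklington"
begin

text \<open>
  For e >= 3, every g = (a, u) in Hol(N) satisfies g^m = (a (1 + u + ... + u^(m-1)), u^m)
  with m = 2^(e-2). The geometric sum is divisible by m and u^m = 1 (mod 2^e), so g^m is
  a translation by a multiple of 2^(e-2). These translations form the subgroup of order 4
  of the cyclic group N. It lies in H, because the subgroup H \<inter> N of N has at least 4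
  elements, and it is normal in Hol(N), so it lies in the core C. Hence every element of
  G/C has order dividing 2^(e-2).

  A transitive T contains elements (1, u1) and (2, u2). When u = 1 (mod 4), the
  translation part of (2^s c, u)^(2^j) with c odd has 2-adic valuation exactly s + j, so
  one of (1, u1), (2, u2) and their product has order larger than 2^(e-2).

  For e = 2 the hypotheses are inconsistent: index 2^e in a subgroup of Hol(N), a group of
  order 2^(2e-1), forces |H| <= 2.
\<close>

lemma (in group) subgroup_nat_pow_closed:
  assumes "subgroup H G" "h \<in> H"
  shows "h [^] (n :: nat) \<in> H"
  using assms by (induction n) (simp_all add: subgroup.one_closed subgroup.m_closed)

lemma (in group) mem_core_iff:
  assumes "subgroup H G"
  shows "x \<in> core G H \<longleftrightarrow> x \<in> carrier G \<and> (\<forall>g\<in>carrier G. inv g \<otimes> x \<otimes> g \<in> H)"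
proof
  assume x: "x \<in> core G H"
  then have "x \<in> (\<lambda>h. \<one> \<otimes> h \<otimes> inv \<one>) ` H"
    unfolding core_def by (rule INT_D) simp
  then obtain h where h: "h \<in> H" "x = \<one> \<otimes> h \<otimes> inv \<one>"
    by blast
  have "x \<in> carrier G"
    using h(2) subgroup.mem_carrier[OF assms h(1)] by simp
  moreover have "inv g \<otimes> x \<otimes> g \<in> H" if "g \<in> carrier G" for g
  proof -
    have "x \<in> (\<lambda>h. g \<otimes> h \<otimes> inv g) ` H"
      using x that unfolding core_def by (rule INT_D)
    then obtain h where h: "h \<in> H" "x = g \<otimes> h \<otimes> inv g"
      by blast
    have "inv g \<otimes> x \<otimes> g = h"
      using h(2) that subgroup.mem_carrier[OF assms h(1)] by (simp add: m_assoc) (simp add: m_assoc[symmetric])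
    then show ?thesis
      using h(1) by simp
  qed
  ultimately show "x \<in> carrier G \<and> (\<forall>g\<in>carrier G. inv g \<otimes> x \<otimes> g \<in> H)"
    by blast
next
  assume x: "x \<in> carrier G \<and> (\<forall>g\<in>carrier G. inv g \<otimes> x \<otimes> g \<in> H)"
  show "x \<in> core G H"
    unfolding core_def
  proof
    fix g
    assume "g \<in> carrier G"
    then show "x \<in> (\<lambda>h. g \<otimes> h \<otimes> inv g) ` H"
      using x conjugation_is_surj[of g x] by (intro image_eqI[of _ _ "inv g \<otimes> x \<otimes> g"]) auto
  qed
qed

lemma (in group) core_normal:
  assumes "subgroup H G"
  shows "core G H \<lhd> G"
  unfolding normal_inv_iff
proof (intro conjI subgroupI ballI)
  show "core G H \<subseteq> carrier G"
    using mem_core_iff[OF assms] by blast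
  have "\<one> \<in> core G H"
    by (simp add: mem_core_iff[OF assms] subgroup.one_closed[OF assms])
  then show "core G H \<noteq> {}"
    by blast
next
  fix x y
  assume "x \<in> core G H" "y \<in> core G H"
  then have x: "x \<in> carrier G" "\<And>g. g \<in> carrier G \<Longrightarrow> inv g \<otimes> x \<otimes> g \<in> H"
    and y: "y \<in> carrier G" "\<And>g. g \<in> carrier G \<Longrightarrow> inv g \<otimes> y \<otimes> g \<in> H"
    by (simp_all add: mem_core_iff[OF assms])
  have "inv g \<otimes> (x \<otimes> y) \<otimes> g \<in> H" if "g \<in> carrier G" for g
  proof -
    have "inv g \<otimes> (x \<otimes> y) \<otimes> g = (inv g \<otimes> x \<otimes> g) \<otimes> (inv g \<otimes> y \<otimes> g)"
      using that x(1) y(1) by (simp add: m_assoc) (simp add: m_assoc[symmetric])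
    then show ?thesis
      using subgroup.m_closed[OF assms x(2)[OF that] y(2)[OF that]] by simp
  qed
  then show "x \<otimes> y \<in> core G H"
    using x(1) y(1) by (simp add: mem_core_iff[OF assms])
next
  fix x
  assume "x \<in> core G H"
  moreover have "inv g \<otimes> inv x \<otimes> g = inv (inv g \<otimes> x \<otimes> g)"
    if "g \<in> carrier G" "x \<in> carrier G" for g x
    using that by (simp add: inv_mult_group m_assoc)
  ultimately show "inv x \<in> core G H"
    by (simp add: mem_core_iff[OF assms] subgroup.m_inv_closed[OF assms])
next
  fix g x
  assume "g \<in> carrier G" "x \<in> core G H"
  moreover have "inv h \<otimes> (g \<otimes> x \<otimes> inv g) \<otimes> h = inv (inv g \<otimes> h) \<otimes> x \<otimes> (inv g \<otimes> h)"
    if "g \<in> carrier G" "h \<in> carrier G" "x \<in> carrier G" for g h x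
    using that by (simp add: inv_mult_group m_assoc)
  ultimately show "g \<otimes> x \<otimes> inv g \<in> core G H"
    by (simp add: mem_core_iff[OF assms])
qed

lemma (in group) subset_core:
  assumes "subgroup H G" "S \<subseteq> H" "\<And>g x. g \<in> carrier G \<Longrightarrow> x \<in> S \<Longrightarrow> inv g \<otimes> x \<otimes> g \<in> S"
  shows "S \<subseteq> core G H"
proof
  fix x
  assume "x \<in> S"
  then show "x \<in> core G H"
    using assms(2,3) subgroup.mem_carrier[OF assms(1)] by (auto simp: mem_core_iff[OF assms(1)])
qed

lemma (in normal) FactGroup_nat_pow_eq_one:
  assumes "\<And>g. g \<in> carrier G \<Longrightarrow> g [^] n \<in> H" "A \<in> carrier (G Mod H)"
  shows "A [^]\<^bsub>G Mod H\<^esub> (n :: nat) = \<one>\<^bsub>G Mod H\<^esub>"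
proof -
  obtain g where g: "g \<in> carrier G" "A = H #> g"
    using assms(2) unfolding FactGroup_def RCOSETS_def by auto
  then show ?thesis
    using FactGroup_pow[OF g(1)] rcos_const[OF is_group assms(1)[OF g(1)]] by simp
qed

lemma iso_nat_pow_eq_one:
  assumes "\<phi> \<in> iso G K" "group G" "group K"
    and "\<And>x. x \<in> carrier G \<Longrightarrow> x [^]\<^bsub>G\<^esub> n = \<one>\<^bsub>G\<^esub>" "y \<in> carrier K"
  shows "y [^]\<^bsub>K\<^esub> (n :: nat) = \<one>\<^bsub>K\<^esub>"
proof -
  have hom: "\<phi> \<in> hom G K"
    using assms(1) by (simp add: iso_def)
  obtain x where x: "x \<in> carrier G" "y = \<phi> x"
    using assms(1,5) unfolding iso_def bij_betw_def by auto
  then have "y [^]\<^bsub>K\<^esub> n = \<phi> (x [^]\<^bsub>G\<^esub> n)"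
    using hom_nat_pow[OF hom x(1) assms(2,3)] by simp
  also have "\<dots> = \<one>\<^bsub>K\<^esub>"
    using assms(4)[OF x(1)] hom_one[OF hom assms(2,3)] by simp
  finally show ?thesis .
qed

lemma sum_power_lessThan_double:
  "(\<Sum>i<2 * m. x ^ i) = (1 + x) * (\<Sum>i<m. (x\<^sup>2) ^ i :: 'a :: comm_semiring_1)"
proof (induction m)
  case (Suc m)
  have "2 * Suc m = Suc (Suc (2 * m))" by simp
  then show ?case
    using Suc by (simp add: algebra_simps power_mult[symmetric] mult.commute[of 2])
qed simp

lemma two_pow_dvd_sum_power:
  assumes "odd (x :: nat)"
  shows "2 ^ k dvd (\<Sum>i<2 ^ k. x ^ i)"
  using assms
proof (induction k arbitrary: x)
  case (Suc k)
  have "2 * 2 ^ k dvd (1 + x) * (\<Sum>i<2 ^ k. (x\<^sup>2) ^ i)"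
    using Suc by (intro mult_dvd_mono) simp_all
  then show ?case
    by (simp add: sum_power_lessThan_double)
qed simp

lemma two_pow_Suc_not_dvd_sum_power:
  assumes "(x :: nat) mod 4 = 1"
  shows "\<not> 2 ^ Suc k dvd (\<Sum>i<2 ^ k. x ^ i)"
  using assms
proof (induction k arbitrary: x)
  case (Suc k)
  define p where "p = (1 + x) div 2"
  have p: "1 + x = 2 * p" "odd p"
    using Suc.prems unfolding p_def by presburger+
  have "x\<^sup>2 mod 4 = 1"
    using Suc.prems by (simp add: power2_eq_square mod_mult_eq[symmetric])
  then have "\<not> 2 ^ Suc k dvd (\<Sum>i<2 ^ k. (x\<^sup>2) ^ i)"
    by (rule Suc.IH)
  then have "\<not> 2 ^ Suc k dvd p * (\<Sum>i<2 ^ k. (x\<^sup>2) ^ i)"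
    using p(2) by (simp add: coprime_dvd_mult_right_iff)
  moreover have "(\<Sum>i<2 ^ Suc k. x ^ i) = 2 * (p * (\<Sum>i<2 ^ k. (x\<^sup>2) ^ i))"
    by (simp only: power_Suc sum_power_lessThan_double p(1) mult.assoc)
  ultimately show ?case
    by simp
qed simp

lemma odd_mod_two_pow_iff: "0 < e \<Longrightarrow> odd ((x :: nat) mod 2 ^ e) \<longleftrightarrow> odd x"
  using dvd_mod_iff[of 2 "2 ^ e" x] by simp

lemma Hol_carrier: "(a, u) \<in> carrier (Hol e) \<longleftrightarrow> a < 2^e \<and> u < 2^e \<and> coprime u (2^e)"
  by (simp add: Hol_def)

lemma Hol_mult [simp]: "(a, u) \<otimes>\<^bsub>Hol e\<^esub> (b, v) = ((a + u * b) mod 2^e, (u * v) mod 2^e)"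
  by (simp add: Hol_def)

lemma Hol_one [simp]: "\<one>\<^bsub>Hol e\<^esub> = (0, 1)"
  by (simp add: Hol_def)

lemma Hol_mult_assoc: "x \<otimes>\<^bsub>Hol e\<^esub> y \<otimes>\<^bsub>Hol e\<^esub> z = x \<otimes>\<^bsub>Hol e\<^esub> (y \<otimes>\<^bsub>Hol e\<^esub> z)"
proof -
  obtain a u b v c w where xyz: "x = (a, u)" "y = (b, v)" "z = (c, w)"
    by (metis surj_pair)
  have "[(a + u * b) mod 2^e + (u * v) mod 2^e * c = (a + u * b) + (u * v) * c] (mod 2^e)"
    by (intro cong_add cong_mult) (simp_all add: cong_def)
  also have "(a + u * b) + (u * v) * c = a + u * (b + v * c)"
    by (simp add: algebra_simps)
  also have "[\<dots> = a + u * ((b + v * c) mod 2^e)] (mod 2^e)"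
    by (intro cong_add cong_mult) (simp_all add: cong_def)
  finally show ?thesis
    by (simp add: xyz cong_def mod_mult_left_eq mod_mult_right_eq mult.assoc)
qed

lemma Hol_left_inverse:
  assumes "0 < e" "(a, u) \<in> carrier (Hol e)"
  shows "\<exists>y\<in>carrier (Hol e). y \<otimes>\<^bsub>Hol e\<^esub> (a, u) = \<one>\<^bsub>Hol e\<^esub>"
proof -
  obtain v where "[u * v = 1] (mod 2^e)"
    using cong_solve_coprime_nat[of u "2^e"] assms(2) unfolding Hol_carrier by auto
  then have uv: "(u * v) mod 2^e = 1"
    using assms(1) by (simp add: cong_def)
  then have v: "(v mod 2^e * u) mod 2^e = 1"
    by (metis mod_mult_left_eq mult.commute)
  from uv have "odd v"
    using odd_mod_two_pow_iff[OF assms(1), of "u * v"] by simp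
  define b where "b = (v mod 2^e * (2^e - a)) mod 2^e"
  have "(b + v mod 2^e * a) mod 2^e = (v mod 2^e * (2^e - a + a)) mod 2^e"
    by (simp add: b_def mod_add_left_eq add_mult_distrib2)
  also have "\<dots> = 0"
    using assms(2) by (simp add: Hol_carrier)
  finally have "(b, v mod 2^e) \<otimes>\<^bsub>Hol e\<^esub> (a, u) = \<one>\<^bsub>Hol e\<^esub>"
    using v by simp
  moreover have "(b, v mod 2^e) \<in> carrier (Hol e)"
    using assms(1) \<open>odd v\<close> by (simp add: Hol_carrier b_def odd_mod_two_pow_iff)
  ultimately show ?thesis by blast
qed

lemma group_Hol:
  assumes "0 < e"
  shows "group (Hol e)"
proof (rule groupI)
  fix x y
  assume "x \<in> carrier (Hol e)" "y \<in> carrier (Hol e)"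
  then show "x \<otimes>\<^bsub>Hol e\<^esub> y \<in> carrier (Hol e)"
    using assms by (cases x, cases y) (simp add: Hol_carrier odd_mod_two_pow_iff)
next
  show "\<one>\<^bsub>Hol e\<^esub> \<in> carrier (Hol e)"
    using assms one_less_power[of "2::nat" e] by (simp add: Hol_carrier)
next
  fix x
  assume "x \<in> carrier (Hol e)"
  then show "\<exists>y\<in>carrier (Hol e). y \<otimes>\<^bsub>Hol e\<^esub> x = \<one>\<^bsub>Hol e\<^esub>"
    using Hol_left_inverse[OF assms] by (cases x) simp
qed (auto simp: Hol_carrier Hol_mult_assoc)

lemma finite_carrier_Hol: "finite (carrier (Hol e))"
  by (rule finite_subset[of _ "{..<2 ^ e} \<times> {..<2 ^ e}"]) (auto simp: Hol_def)

lemma card_carrier_Hol: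
  assumes "0 < e"
  shows "card (carrier (Hol e)) = 2 ^ e * 2 ^ (e - 1)"
proof -
  have "carrier (Hol e) = {..<2 ^ e} \<times> totatives (2 ^ e)"
    using assms by (auto simp: Hol_def totatives_def odd_pos le_less)
  then show ?thesis
    using totient_prime_power[of 2 e] assms by (simp add: card_cartesian_product totient_def)
qed

lemma Hol_nat_pow:
  assumes "0 < e"
  shows "(a, u) [^]\<^bsub>Hol e\<^esub> n = ((a * (\<Sum>i<n. u ^ i)) mod 2^e, u ^ n mod 2^e)"
proof (induction n)
  case 0
  show ?case using assms by (simp add: one_less_power)
next
  case (Suc n)
  have "[(a * (\<Sum>i<n. u ^ i)) mod 2^e + u ^ n mod 2^e * a = a * (\<Sum>i<n. u ^ i) + u ^ n * a] (mod 2^e)"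
    by (intro cong_add cong_mult) (simp_all add: cong_def)
  then show ?case
    using Suc by (simp add: cong_def mod_mult_right_eq algebra_simps)
qed

lemma Hol_mult_transl: "(a, u) \<otimes>\<^bsub>Hol e\<^esub> (b, 1) = ((u * b) mod 2^e, 1) \<otimes>\<^bsub>Hol e\<^esub> (a, u)"
  by (simp add: mod_add_left_eq add.commute[of a])

definition transl_order_4 :: "nat \<Rightarrow> (nat \<times> nat) set" where
  "transl_order_4 e = {(b, 1) | b. b < 2^e \<and> 2^(e - 2) dvd b}"

lemma Hol_pow_two_pow_in_transl_order_4:
  assumes "3 \<le> e" "x \<in> carrier (Hol e)"
  shows "x [^]\<^bsub>Hol e\<^esub> (2 ^ (e - 2) :: nat) \<in> transl_order_4 e"
proof -
  obtain a u where x: "x = (a, u)" "odd u"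
    using assms by (cases x) (auto simp: Hol_carrier)
  have "2 ^ (e - 2) dvd a * (\<Sum>i<2 ^ (e - 2). u ^ i)"
    using two_pow_dvd_sum_power[OF x(2)] by (rule dvd_mult)
  then have "2 ^ (e - 2) dvd (a * (\<Sum>i<2 ^ (e - 2). u ^ i)) mod 2 ^ e"
    using le_imp_power_dvd[of "e - 2" e "2::nat"] by (simp add: dvd_mod_iff)
  moreover have "u ^ 2 ^ (e - 2) mod 2 ^ e = 1"
    using ord_twopow_aux[OF assms(1) x(2)] assms(1) by (simp add: cong_def one_less_power)
  ultimately show ?thesis
    using assms(1) by (simp add: x Hol_nat_pow transl_order_4_def)
qed

lemma Hol_conj_transl_order_4:
  assumes "0 < e" "g \<in> carrier (Hol e)" "x \<in> transl_order_4 e"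
  shows "inv\<^bsub>Hol e\<^esub> g \<otimes>\<^bsub>Hol e\<^esub> x \<otimes>\<^bsub>Hol e\<^esub> g \<in> transl_order_4 e"
proof -
  interpret group "Hol e"
    using group_Hol[OF assms(1)] .
  obtain b where x: "x = (b, 1)" "2 ^ (e - 2) dvd b"
    using assms(3) unfolding transl_order_4_def by auto
  obtain a u where g': "inv\<^bsub>Hol e\<^esub> g = (a, u)"
    by (cases "inv\<^bsub>Hol e\<^esub> g")
  have "2 ^ (e - 2) dvd (u * b) mod 2 ^ e"
    using x(2) le_imp_power_dvd[of "e - 2" e "2::nat"] by (simp add: dvd_mod_iff)
  then have y: "((u * b) mod 2 ^ e, 1) \<in> transl_order_4 e"
    using assms(1) by (simp add: transl_order_4_def)
  then have "((u * b) mod 2 ^ e, 1) \<in> carrier (Hol e)"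
    using assms(1) one_less_power[of "2::nat" e] by (auto simp: transl_order_4_def Hol_carrier)
  moreover have "inv\<^bsub>Hol e\<^esub> g \<otimes>\<^bsub>Hol e\<^esub> x = ((u * b) mod 2 ^ e, 1) \<otimes>\<^bsub>Hol e\<^esub> inv\<^bsub>Hol e\<^esub> g"
    unfolding g' x(1) by (rule Hol_mult_transl)
  ultimately have "inv\<^bsub>Hol e\<^esub> g \<otimes>\<^bsub>Hol e\<^esub> x \<otimes>\<^bsub>Hol e\<^esub> g = ((u * b) mod 2 ^ e, 1)"
    using assms(1,2) by (simp add: m_assoc)
  with y show ?thesis
    by simp
qed

lemma exists_transl_not_dvd:
  assumes "2 < card (S \<inter> transl e)"
  shows "\<exists>a. (a, 1) \<in> S \<and> \<not> 2 ^ (e - 1) dvd a"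
proof (rule ccontr)
  assume all_dvd: "\<not> ?thesis"
  have "x \<in> {(0, 1), (2 ^ (e - 1), 1)}" if x: "x \<in> S \<inter> transl e" for x
  proof -
    obtain a where a: "x = (a, 1)" "(a, 1) \<in> S" "a < 2 ^ e"
      using x unfolding transl_def by blast
    with all_dvd obtain q where q: "a = 2 ^ (e - 1) * q"
      by blast
    have "(2::nat) ^ e \<le> 2 ^ (e - 1) * 2"
      by (cases e) simp_all
    with a(3) q have "2 ^ (e - 1) * q < 2 ^ (e - 1) * (2::nat)"
      by linarith
    then have "q < 2"
      by simp
    with a(1) q show ?thesis
      by (cases q) auto
  qed
  then have "S \<inter> transl e \<subseteq> {(0, 1), (2 ^ (e - 1), 1)}"
    by blast
  then have "card (S \<inter> transl e) \<le> card {(0::nat, 1::nat), (2 ^ (e - 1), 1)}"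
    by (rule card_mono[rotated]) simp
  also have "\<dots> \<le> 2"
    by (rule card_insert_le_m1) simp_all
  finally show False
    using assms by simp
qed

lemma transl_order_4_in_powers:
  assumes "2 \<le> e" "\<not> 2 ^ (e - 1) dvd a" "x \<in> transl_order_4 e"
  shows "\<exists>k. (a, 1) [^]\<^bsub>Hol e\<^esub> (k :: nat) = x"
proof -
  obtain d where "e = d + 2"
    using assms(1) by (metis le_add_diff_inverse2)
  then have two_pow_e: "(2::nat) ^ e = 2 ^ (e - 2) * 4"
    by (simp add: power_add)
  obtain q where x: "x = (2 ^ (e - 2) * q, 1)" "2 ^ (e - 2) * q < (2::nat) ^ e"
    using assms(3) unfolding transl_order_4_def by auto
  have "a \<noteq> 0"
    using assms(2) by (metis dvd_0_right)
  then obtain s c where sc: "a = 2 ^ s * c" "odd c"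
    using multiplicity_decompose'[of a 2] by (simp, blast)
  have "s \<le> e - 2"
  proof (rule ccontr)
    assume "\<not> s \<le> e - 2"
    then have "2 ^ (e - 1) dvd a"
      using sc(1) le_imp_power_dvd[of "e - 1" s "2::nat"] by (simp add: dvd_mult2)
    with assms(2) show False
      by contradiction
  qed
  have "c\<^sup>2 mod 8 = 1"
    using square_mod_8_eq_1_iff[of c] sc(2) by (simp add: cong_def)
  then obtain t where t: "c\<^sup>2 = 8 * t + 1"
    by (metis div_mult_mod_eq mult.commute)
  \<comment> \<open>c is its own inverse modulo 8, so a * k = 2^(e-2) q c^2 = 2^(e-2) q (mod 2^e)\<close>
  define k where "k = 2 ^ (e - 2 - s) * c * q"
  have "2 ^ s * 2 ^ (e - 2 - s) = (2::nat) ^ (e - 2)"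
    using \<open>s \<le> e - 2\<close> by (simp flip: power_add)
  then have "a * k = 2 ^ (e - 2) * q * c\<^sup>2"
    by (simp add: k_def sc(1) power2_eq_square algebra_simps)
  also have "\<dots> = 2 ^ e * (2 * q * t) + 2 ^ (e - 2) * q"
    by (simp add: t two_pow_e algebra_simps)
  finally have "(a, 1) [^]\<^bsub>Hol e\<^esub> k = x"
    using x assms(1) by (simp add: Hol_nat_pow)
  then show ?thesis ..
qed

lemma transl_order_4_subset:
  assumes "2 \<le> e" "subgroup H (Hol e)" "4 \<le> card (H \<inter> transl e)"
  shows "transl_order_4 e \<subseteq> H"
proof
  fix x
  assume "x \<in> transl_order_4 e"
  obtain a where "(a, 1) \<in> H" "\<not> 2 ^ (e - 1) dvd a"
    using exists_transl_not_dvd[of H e] assms(3) by auto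
  moreover obtain k where "(a, 1) [^]\<^bsub>Hol e\<^esub> (k :: nat) = x"
    using transl_order_4_in_powers assms(1) \<open>x \<in> transl_order_4 e\<close> calculation(2) by blast
  ultimately show "x \<in> H"
    using group.subgroup_nat_pow_closed[OF group_Hol assms(2)] assms(1) by fastforce
qed

lemma Hol_pow_two_pow_ne_one:
  assumes "a = 2 ^ s * c" "odd c" "u mod 4 = 1" "s + j < e"
  shows "(a, u) [^]\<^bsub>Hol e\<^esub> (2 ^ j :: nat) \<noteq> \<one>\<^bsub>Hol e\<^esub>"
proof
  define S where "S = (\<Sum>i<2 ^ j. u ^ i)"
  assume "(a, u) [^]\<^bsub>Hol e\<^esub> (2 ^ j :: nat) = \<one>\<^bsub>Hol e\<^esub>"
  then have "2 ^ e dvd 2 ^ s * (c * S)"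
    using assms(1,4) by (simp add: Hol_nat_pow S_def mult.assoc mod_eq_0_iff_dvd)
  then have "2 ^ s * 2 ^ Suc j dvd 2 ^ s * (c * S)"
    using assms(4) by (metis dvd_trans le_imp_power_dvd power_add Suc_leI add_Suc_right)
  then have "2 ^ Suc j dvd S"
    using assms(2) by (simp add: coprime_dvd_mult_right_iff)
  then show False
    using two_pow_Suc_not_dvd_sum_power[OF assms(3)] by (simp add: S_def)
qed

lemma transitive_sub_translation_part:
  assumes "0 < e" "transitive_sub e T" "a < 2 ^ e"
  shows "\<exists>u. (a, u) \<in> T \<and> odd u"
proof -
  obtain g where g: "g \<in> T" "hol_act e g 0 = a"
    using assms(2,3) unfolding transitive_sub_def by force
  have "g \<in> carrier (Hol e)"
    using g(1) assms(2) subgroup.subset unfolding transitive_sub_def by blast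
  then show ?thesis
    using g assms(1) by (cases g) (auto simp: Hol_carrier hol_act_def)
qed

lemma transitive_sub_obtains_multiplier_1_mod_4:
  assumes "2 \<le> e" "transitive_sub e T"
  obtains s c u where "(2 ^ s * c, u) \<in> T" "odd c" "s \<le> 1" "u mod 4 = 1"
proof -
  have e0: "0 < e" and "(2::nat) < 2 ^ e"
    using assms(1) power_strict_increasing_iff[of "2::nat" 1 e] by simp_all
  then obtain u1 u2 where t1: "(1, u1) \<in> T" "odd u1" and t2: "(2, u2) \<in> T" "odd u2"
    using transitive_sub_translation_part[OF e0 assms(2), of 1]
      transitive_sub_translation_part[OF e0 assms(2), of 2] by auto
  have mod_4: "u mod 4 = 1 \<or> u mod 4 = 3" if "odd (u :: nat)" for u
    using that by presburger
  consider "u1 mod 4 = 1" | "u2 mod 4 = 1" | "u1 mod 4 = 3" "u2 mod 4 = 3"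
    using mod_4[OF t1(2)] mod_4[OF t2(2)] by blast
  then show ?thesis
  proof cases
    case 1
    then show ?thesis
      using that[of 0 1 u1] t1(1) by simp
  next
    case 2
    then show ?thesis
      using that[of 1 1 u2] t2(1) by simp
  next
    case 3
    have "(4::nat) dvd 2 ^ e"
      using le_imp_power_dvd[OF assms(1), of "2::nat"] by simp
    then have "(u1 * u2) mod 2 ^ e mod 4 = (u1 mod 4) * (u2 mod 4) mod 4"
      by (simp add: mod_mod_cancel mod_mult_eq)
    moreover have "odd ((1 + u1 * 2) mod 2 ^ e)"
      using odd_mod_two_pow_iff[OF e0, of "1 + u1 * 2"] by simp
    moreover have "(1, u1) \<otimes>\<^bsub>Hol e\<^esub> (2, u2) \<in> T"
      using assms(2) t1(1) t2(1) unfolding transitive_sub_def by (blast intro: subgroup.m_closed)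
    ultimately show ?thesis
      using that[of 0 "(1 + u1 * 2) mod 2 ^ e" "(u1 * u2) mod 2 ^ e"] 3 by simp
  qed
qed

lemma transitive_sub_pow_ne_one:
  assumes "2 \<le> e" "transitive_sub e T"
  shows "\<exists>t\<in>T. t [^]\<^bsub>Hol e\<^esub> (2 ^ (e - 2) :: nat) \<noteq> \<one>\<^bsub>Hol e\<^esub>"
proof -
  obtain s c u where "(2 ^ s * c, u) \<in> T" "odd c" "s \<le> 1" "u mod 4 = 1"
    using transitive_sub_obtains_multiplier_1_mod_4[OF assms] .
  moreover have "(2 ^ s * c, u) [^]\<^bsub>Hol e\<^esub> (2 ^ (e - 2) :: nat) \<noteq> \<one>\<^bsub>Hol e\<^esub>"
    using calculation assms(1) by (intro Hol_pow_two_pow_ne_one[of _ s c]) simp_all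
  ultimately show ?thesis
    by blast
qed

lemma Hol_quotient_core_pow_eq_one:
  fixes e :: nat and G H :: "(nat \<times> nat) set"
  defines "G' \<equiv> (Hol e)\<lparr>carrier := G\<rparr>"
  assumes "3 \<le> e" "subgroup G (Hol e)" "subgroup H G'" "4 \<le> card (H \<inter> transl e)"
    and "A \<in> carrier (G' Mod core G' H)"
  shows "A [^]\<^bsub>G' Mod core G' H\<^esub> (2 ^ (e - 2) :: nat) = \<one>\<^bsub>G' Mod core G' H\<^esub>"
proof -
  interpret Hol: group "Hol e"
    using group_Hol assms(2) by simp
  interpret G': group G'
    unfolding G'_def using Hol.subgroup_imp_group[OF assms(3)] .
  have "transl_order_4 e \<subseteq> H"
    using transl_order_4_subset assms(2,5) Hol.incl_subgroup[OF assms(3) assms(4)[unfolded G'_def]]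
    by simp
  moreover have "inv\<^bsub>G'\<^esub> g \<otimes>\<^bsub>G'\<^esub> x \<otimes>\<^bsub>G'\<^esub> g \<in> transl_order_4 e"
    if "g \<in> carrier G'" "x \<in> transl_order_4 e" for g x
    using that Hol_conj_transl_order_4[of e g x] assms(2,3) subgroup.mem_carrier[OF assms(3)]
    by (simp add: G'_def)
  ultimately have core: "transl_order_4 e \<subseteq> core G' H"
    using G'.subset_core[OF assms(4)] by blast
  have "g [^]\<^bsub>G'\<^esub> (2 ^ (e - 2) :: nat) \<in> core G' H" if "g \<in> carrier G'" for g
  proof -
    have "g \<in> carrier (Hol e)"
      using that subgroup.mem_carrier[OF assms(3)] by (simp add: G'_def)
    then have "g [^]\<^bsub>Hol e\<^esub> (2 ^ (e - 2) :: nat) \<in> core G' H"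
      using Hol_pow_two_pow_in_transl_order_4[OF assms(2)] core by blast
    then show ?thesis
      by (simp add: G'_def Hol.nat_pow_consistent[symmetric])
  qed
  then show ?thesis
    using normal.FactGroup_nat_pow_eq_one[OF G'.core_normal[OF assms(4)] _ assms(6)] by blast
qed

lemma card_subgroup_le_of_index_Hol:
  fixes e :: nat and G H :: "(nat \<times> nat) set"
  defines "G' \<equiv> (Hol e)\<lparr>carrier := G\<rparr>"
  assumes "0 < e" "subgroup G (Hol e)" "subgroup H G'" "card (rcosets\<^bsub>G'\<^esub> H) = 2 ^ e"
  shows "card H \<le> 2 ^ (e - 1)"
proof -
  interpret Hol: group "Hol e"
    using group_Hol assms(2) by simp
  interpret G': group G'
    unfolding G'_def using Hol.subgroup_imp_group[OF assms(3)] .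
  have "2 ^ e * card H = card G"
    using G'.lagrange[OF assms(4)] assms(5) by (simp add: order_def G'_def)
  also have "\<dots> \<le> 2 ^ e * 2 ^ (e - 1)"
    using card_carrier_Hol[OF assms(2)] card_mono[OF finite_carrier_Hol subgroup.subset[OF assms(3)]]
    by simp
  finally show ?thesis
    by simp
qed

lemma quotient_core_not_iso_transitive_sub:
  fixes e :: nat and G H T :: "(nat \<times> nat) set"
  defines "G' \<equiv> (Hol e)\<lparr>carrier := G\<rparr>"
  assumes "3 \<le> e" "subgroup G (Hol e)" "subgroup H G'" "4 \<le> card (H \<inter> transl e)"
    and "transitive_sub e T"
  shows "\<not> (G' Mod core G' H) \<cong> (Hol e)\<lparr>carrier := T\<rparr>"
proof
  assume "(G' Mod core G' H) \<cong> (Hol e)\<lparr>carrier := T\<rparr>"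
  then obtain \<phi> where \<phi>: "\<phi> \<in> iso (G' Mod core G' H) ((Hol e)\<lparr>carrier := T\<rparr>)"
    unfolding is_iso_def by blast
  interpret Hol: group "Hol e"
    using group_Hol assms(2) by simp
  have "group (G' Mod core G' H)"
    using normal.factorgroup_is_group group.core_normal Hol.subgroup_imp_group assms(3,4)
    unfolding G'_def by blast
  then have "t [^]\<^bsub>(Hol e)\<lparr>carrier := T\<rparr>\<^esub> (2 ^ (e - 2) :: nat) = \<one>\<^bsub>(Hol e)\<lparr>carrier := T\<rparr>\<^esub>"
    if "t \<in> T" for t
    using iso_nat_pow_eq_one[OF \<phi> _ Hol.subgroup_imp_group]
      Hol_quotient_core_pow_eq_one[OF assms(2,3) assms(4)[unfolded G'_def] assms(5)] that assms(6)
    unfolding transitive_sub_def G'_def by simp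
  then show False
    using transitive_sub_pow_ne_one[of e T] assms(2,6) by (simp add: Hol.nat_pow_consistent[symmetric])
qed

theorem proposition5p4:
  fixes e :: nat and G H :: "(nat \<times> nat) set"
  assumes "e \<ge> 2"
    and "subgroup G (Hol e)"
    and "subgroup H ((Hol e)\<lparr>carrier := G\<rparr>)"
    and "card (rcosets\<^bsub>(Hol e)\<lparr>carrier := G\<rparr>\<^esub> H) = 2 ^ e"
    and "card (H \<inter> transl e) \<ge> 4"
  shows "\<not> (\<exists>T. transitive_sub e T \<and>
           ((Hol e)\<lparr>carrier := G\<rparr> Mod core ((Hol e)\<lparr>carrier := G\<rparr>) H) \<cong> (Hol e)\<lparr>carrier := T\<rparr>)"
proof
  assume "\<exists>T. transitive_sub e T \<and>
    ((Hol e)\<lparr>carrier := G\<rparr> Mod core ((Hol e)\<lparr>carrier := G\<rparr>) H) \<cong> (Hol e)\<lparr>carrier := T\<rparr>"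
  then obtain T where T: "transitive_sub e T"
    and iso: "((Hol e)\<lparr>carrier := G\<rparr> Mod core ((Hol e)\<lparr>carrier := G\<rparr>) H) \<cong> (Hol e)\<lparr>carrier := T\<rparr>"
    by blast
  show False
  proof (cases "e = 2")
    case True
    have "subgroup H (Hol e)"
      using group.incl_subgroup[OF group_Hol assms(2,3)] assms(1) by simp
    then have "finite H"
      using finite_carrier_Hol by (rule finite_subset[OF subgroup.subset])
    then have "card (H \<inter> transl e) \<le> card H"
      by (simp add: card_mono)
    with card_subgroup_le_of_index_Hol[OF _ assms(2-4)] True assms(5) show False
      by simp
  next
    case False
    with assms(1) have "3 \<le> e"
      by simp
    with quotient_core_not_iso_transitive_sub assms(2,3,5) T iso show False
      by blast
  qed
qed

end
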